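(* Let $B=(L,R,\omega,\lambda,\rho)$ be a bimachine defining a total function $f:\Sigma^\ast\to\Sigma^\ast$. Then $\sim_L\sqsubseteq\sim_{L_0}$ and $\sim_R\sqsubseteq\sim_{R_0}$.
   Context: A bimachine is $B=(L,R,\omega,\lambda,\rho)$ with $L$ a deterministic left automaton (initial state $l_0$), $R$ a deterministic right automaton reading right to left (initial state $r_0$), $\omega:L\times\Sigma\times R\to\Sigma^\ast$ partial, $\rho:L\to\Sigma^\ast$, $\lambda:R\to\Sigma^\ast$ partial. For $u=\sigma_1\cdots\sigma_n$ with runs $l_0\xrightarrow{\sigma_1}l_1\cdots\xrightarrow{\sigma_n}l_n$ and $r_n\xleftarrow{\sigma_1}r_{n-1}\cdots r_1\xleftarrow{\sigma_n}r_0$, $[\![B]\!](u)=\lambda(r_n)\prod_{i=1}^n\omega(l_{i-1},\sigma_i,r_{n-i})\,\rho(l_n)$ when everything is defined. For a deterministic left (resp. right) automaton $A$ with initial state $q_0$, $u\sim_A v$ iff for every state $p$, $A$ reaches $p$ from $q_0$ reading $u$ (resp. reading $u$ from right to left) iff it does so reading $v$. For equivalences, $\sim_1\sqsubseteq\sim_2$ means $u\sim_1v\Rightarrow u\sim_2 v$. Let $u\wedge v$ be the longest common prefix and $u\vee v$ the longest common suffix of $u,v$; left distance $\lVert u,v\rVert=|u|+|v|-2|u\wedge v|$, right distance $\lVert u,v\rVert_r=|u|+|v|-2|u\vee v|$. $u\sim_{R_0}v$ iff for all $w$, $wu\in\mathrm{dom}(f)\Leftrightarrow wv\in\mathrm{dom}(f)$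 and $\sup_w\lVert f(wu),f(wv)\rVert<\infty$ (over $w$ with $wu\in\mathrm{dom} f$). Symmetrically $u\sim_{L_0}v$ iff for all $w$, $uw\in\mathrm{dom}(f)\Leftrightarrow vw\in\mathrm{dom}(f)$ and $\sup_w\lVert f(uw),f(vw)\rVert_r<\infty$. *)

theory Defs
  imports Main "HOL-Library.Sublist"
begin

fun lrun :: "('q \<Rightarrow> 'a \<Rightarrow> 'q option) \<Rightarrow> 'q \<Rightarrow> 'a list \<Rightarrow> 'q option" where
  "lrun \<delta> q [] = Some q"
| "lrun \<delta> q (a # u) = (case \<delta> q a of None \<Rightarrow> None | Some q' \<Rightarrow> lrun \<delta> q' u)"

definition rrun :: "('q \<Rightarrow> 'a \<Rightarrow> 'q option) \<Rightarrow> 'q \<Rightarrow> 'a list \<Rightarrow> 'q option" where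
  "rrun \<delta> q u = lrun \<delta> q (rev u)"

(* semantics of the bimachine B = (L,R,omega,lambda,rho):
   L = (dL, l0), R = (dR, r0); letter i (0-based) is read with left state after take i u
   and right state after reading drop (i+1) u from the right. *)
definition bm_sem ::
  "('l \<Rightarrow> 'a \<Rightarrow> 'l option) \<Rightarrow> 'l \<Rightarrow> ('r \<Rightarrow> 'a \<Rightarrow> 'r option) \<Rightarrow> 'r \<Rightarrow>
   ('l \<Rightarrow> 'a \<Rightarrow> 'r \<Rightarrow> 'a list option) \<Rightarrow> ('r \<Rightarrow> 'a list option) \<Rightarrow> ('l \<Rightarrow> 'a list) \<Rightarrow>
   'a list \<Rightarrow> 'a list option" where
  "bm_sem dL l0 dR r0 \<omega> lam \<rho> u =
     (case lrun dL l0 u of None \<Rightarrow> None | Some ln \<Rightarrow>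
      (case rrun dR r0 u of None \<Rightarrow> None | Some rn \<Rightarrow>
       (case lam rn of None \<Rightarrow> None | Some x \<Rightarrow>
        (case those (map (\<lambda>i. case lrun dL l0 (take i u) of None \<Rightarrow> None | Some l \<Rightarrow>
                               (case rrun dR r0 (drop (Suc i) u) of None \<Rightarrow> None | Some r \<Rightarrow>
                                  \<omega> l (u ! i) r)) [0..<length u]) of
           None \<Rightarrow> None
         | Some ys \<Rightarrow> Some (x @ concat ys @ \<rho> ln)))))"

definition sim_left :: "('q \<Rightarrow> 'a \<Rightarrow> 'q option) \<Rightarrow> 'q \<Rightarrow> 'a list \<Rightarrow> 'a list \<Rightarrow> bool" where
  "sim_left \<delta> q0 u v = (\<forall>p. lrun \<delta> q0 u = Some p \<longleftrightarrow> lrun \<delta> q0 v = Some p)"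

definition sim_right :: "('q \<Rightarrow> 'a \<Rightarrow> 'q option) \<Rightarrow> 'q \<Rightarrow> 'a list \<Rightarrow> 'a list \<Rightarrow> bool" where
  "sim_right \<delta> q0 u v = (\<forall>p. rrun \<delta> q0 u = Some p \<longleftrightarrow> rrun \<delta> q0 v = Some p)"

definition longest_common_suffix :: "'a list \<Rightarrow> 'a list \<Rightarrow> 'a list" where
  "longest_common_suffix u v = rev (longest_common_prefix (rev u) (rev v))"

definition ldist :: "'a list \<Rightarrow> 'a list \<Rightarrow> nat" where
  "ldist u v = length u + length v - 2 * length (longest_common_prefix u v)"

definition rdist :: "'a list \<Rightarrow> 'a list \<Rightarrow> nat" where
  "rdist u v = length u + length v - 2 * length (longest_common_suffix u v)"

(* ~_{R_0} and ~_{L_0} for a partial function f (dom f = {u. f u \<noteq> None});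
   sup < infinity rendered as existence of a uniform bound *)
definition sim_R0 :: "('a list \<Rightarrow> 'a list option) \<Rightarrow> 'a list \<Rightarrow> 'a list \<Rightarrow> bool" where
  "sim_R0 f u v =
    ((\<forall>w. f (w @ u) \<noteq> None \<longleftrightarrow> f (w @ v) \<noteq> None) \<and>
     (\<exists>C. \<forall>w. f (w @ u) \<noteq> None \<longrightarrow> ldist (the (f (w @ u))) (the (f (w @ v))) \<le> C))"

definition sim_L0 :: "('a list \<Rightarrow> 'a list option) \<Rightarrow> 'a list \<Rightarrow> 'a list \<Rightarrow> bool" where
  "sim_L0 f u v =
    ((\<forall>w. f (u @ w) \<noteq> None \<longleftrightarrow> f (v @ w) \<noteq> None) \<and>
     (\<exists>C. \<forall>w. f (u @ w) \<noteq> None \<longrightarrow> rdist (the (f (u @ w))) (the (f (v @ w))) \<le> C))"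

end

theory Submission
  imports Defs
begin

text \<open>If \<open>u\<close> and \<open>v\<close> lead the left automaton to the same state, then on \<open>u @ w\<close> and \<open>v @ w\<close>
  the bimachine emits the same output from the first letter of \<open>w\<close> on, since every such letter
  sees the same left state and the same right state. The outputs therefore differ only in their
  prefixes produced while reading \<open>u\<close> resp. \<open>v\<close>, and these have length linear in \<open>|u|\<close> resp.
  \<open>|v|\<close> because finitely many states and letters bound the length of every single output.
  Hence their right distance is bounded independently of \<open>w\<close>. The right automaton is symmetric.\<close>

lemma those_map_eq_SomeD:
  "those (map g xs) = Some ys \<Longrightarrow> (\<forall>x\<in>set xs. g x \<noteq> None) \<and> ys = map (\<lambda>x. the (g x)) xs"
  by (induction xs arbitrary: ys) (auto split: option.splits)

lemma concat_map_upt_add: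
  "concat (map h [0..<m + n]) = concat (map h [0..<m]) @ concat (map (\<lambda>j. h (m + j)) [0..<n])"
proof -
  have "[m..<m + n] = map (\<lambda>j. m + j) [0..<n]"
    using map_add_upt[of m n] by (simp add: add.commute)
  then show ?thesis
    using upt_add_eq_append[of 0 m n] by (simp add: comp_def)
qed

lemma length_concat_map_le:
  "(\<And>x. length (h x) \<le> K) \<Longrightarrow> length (concat (map h xs)) \<le> length xs * K"
  by (induction xs) (auto simp: add_mono)

lemma finite_UNIV_nat_bounded: "\<exists>K. \<forall>x::'a::finite. g x \<le> (K::nat)"
  by (metis Max_ge finite_UNIV finite_imageI rangeI)

lemma rdist_append_same_le: "rdist (a @ s) (b @ s) \<le> length a + length b"
proof -
  have "prefix (rev s) (longest_common_prefix (rev (a @ s)) (rev (b @ s)))"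
    by (rule longest_common_prefix_max_prefix) auto
  then have "length s \<le> length (longest_common_suffix (a @ s) (b @ s))"
    unfolding longest_common_suffix_def using prefix_length_le by fastforce
  then show ?thesis
    unfolding rdist_def by simp
qed

lemma ldist_same_append_le: "ldist (s @ a) (s @ b) \<le> length a + length b"
proof -
  have "prefix s (longest_common_prefix (s @ a) (s @ b))"
    by (rule longest_common_prefix_max_prefix) auto
  then have "length s \<le> length (longest_common_prefix (s @ a) (s @ b))"
    using prefix_length_le by fastforce
  then show ?thesis
    unfolding ldist_def by simp
qed

lemma lrun_append:
  "lrun \<delta> q (u @ x) = (case lrun \<delta> q u of None \<Rightarrow> None | Some p \<Rightarrow> lrun \<delta> p x)"
  by (induction u arbitrary: q) (auto split: option.splits)

lemma rrun_append:
  "rrun \<delta> q (x @ u) = (case rrun \<delta> q u of None \<Rightarrow> None | Some p \<Rightarrow> rrun \<delta> p x)"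
  unfolding rrun_def by (simp add: lrun_append)

lemma sim_left_iff: "sim_left \<delta> q u v \<longleftrightarrow> lrun \<delta> q u = lrun \<delta> q v"
  unfolding sim_left_def by (metis option.exhaust)

lemma sim_right_iff: "sim_right \<delta> q u v \<longleftrightarrow> rrun \<delta> q u = rrun \<delta> q v"
  unfolding sim_right_def by (metis option.exhaust)

locale total_bimachine =
  fixes dL :: "'l::finite \<Rightarrow> 'a::finite \<Rightarrow> 'l option" and l0 :: 'l
    and dR :: "'r::finite \<Rightarrow> 'a \<Rightarrow> 'r option" and r0 :: 'r
    and \<omega> :: "'l \<Rightarrow> 'a \<Rightarrow> 'r \<Rightarrow> 'a list option"
    and lam :: "'r \<Rightarrow> 'a list option" and \<rho> :: "'l \<Rightarrow> 'a list"
    and f :: "'a list \<Rightarrow> 'a list"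
  assumes total: "\<And>u. bm_sem dL l0 dR r0 \<omega> lam \<rho> u = Some (f u)"
begin

definition letter_out :: "'a list \<Rightarrow> nat \<Rightarrow> 'a list" where
  "letter_out x i =
     the (\<omega> (the (lrun dL l0 (take i x))) (x ! i) (the (rrun dR r0 (drop (Suc i) x))))"

definition out_prefix :: "'a list \<Rightarrow> 'a list \<Rightarrow> 'a list" where
  "out_prefix x w =
     the (lam (the (rrun dR r0 (x @ w)))) @ concat (map (letter_out (x @ w)) [0..<length x])"

definition out_suffix :: "'a list \<Rightarrow> 'a list \<Rightarrow> 'a list" where
  "out_suffix x w =
     concat (map (\<lambda>j. letter_out (x @ w) (length x + j)) [0..<length w]) @ \<rho> (the (lrun dL l0 (x @ w)))"

lemma f_eq:
  "f x = the (lam (the (rrun dR r0 x))) @ concat (map (letter_out x) [0..<length x])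
           @ \<rho> (the (lrun dL l0 x))"
proof -
  define g where "g i = (case lrun dL l0 (take i x) of None \<Rightarrow> None | Some l \<Rightarrow>
                          (case rrun dR r0 (drop (Suc i) x) of None \<Rightarrow> None | Some r \<Rightarrow>
                             \<omega> l (x ! i) r))" for i
  have the_g: "the (g i) = letter_out x i" if "g i \<noteq> None" for i
    using that unfolding g_def letter_out_def by (auto split: option.splits)
  obtain ln rn z ys where
    "lrun dL l0 x = Some ln" "rrun dR r0 x = Some rn" "lam rn = Some z"
    and ys: "those (map g [0..<length x]) = Some ys" and "f x = z @ concat ys @ \<rho> ln"
    using total[of x] unfolding bm_sem_def g_def by (auto split: option.splits)
  moreover have "ys = map (letter_out x) [0..<length x]"
    using those_map_eq_SomeD[OF ys] the_g by auto
  ultimately show ?thesis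
    by simp
qed

lemma f_append_eq: "f (x @ w) = out_prefix x w @ out_suffix x w"
  unfolding f_eq[of "x @ w"] out_prefix_def out_suffix_def
  using concat_map_upt_add[of "letter_out (x @ w)" "length x" "length w"] by simp

lemma out_suffix_eq_if_lrun_eq:
  assumes "lrun dL l0 u = lrun dL l0 v"
  shows "out_suffix u w = out_suffix v w"
proof -
  have "lrun dL l0 (u @ x) = lrun dL l0 (v @ x)" for x
    by (simp add: lrun_append assms)
  then show ?thesis
    unfolding out_suffix_def letter_out_def by (simp add: nth_append)
qed

lemma out_prefix_eq_if_rrun_eq:
  assumes "rrun dR r0 u = rrun dR r0 v"
  shows "out_prefix w u = out_prefix w v"
proof -
  have rrun_eq: "rrun dR r0 (x @ u) = rrun dR r0 (x @ v)" for x
    unfolding rrun_append assms ..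
  have "letter_out (w @ u) j = letter_out (w @ v) j" if "j < length w" for j
  proof -
    have "drop (Suc j) (w @ u) = drop (Suc j) w @ u" "drop (Suc j) (w @ v) = drop (Suc j) w @ v"
      using that by simp_all
    then show ?thesis
      unfolding letter_out_def using that by (simp add: nth_append rrun_eq)
  qed
  then have "map (letter_out (w @ u)) [0..<length w] = map (letter_out (w @ v)) [0..<length w]"
    by (intro map_cong) auto
  then show ?thesis
    unfolding out_prefix_def by (simp only: rrun_eq)
qed

lemma output_bound:
  obtains K where "\<And>x i. length (letter_out x i) \<le> K"
    and "\<And>r. length (the (lam r)) \<le> K" and "\<And>l. length (\<rho> l) \<le> K"
proof -
  obtain Kw where Kw: "\<And>l a r. length (the (\<omega> l a r)) \<le> Kw"
    using finite_UNIV_nat_bounded[of "\<lambda>(l, a, r). length (the (\<omega> l a r))"] by auto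
  obtain Klam where Klam: "\<And>r. length (the (lam r)) \<le> Klam"
    using finite_UNIV_nat_bounded by blast
  obtain Kr where Kr: "\<And>l. length (\<rho> l) \<le> Kr"
    using finite_UNIV_nat_bounded by blast
  have "length (letter_out x i) \<le> Kw" for x i
    unfolding letter_out_def by (rule Kw)
  with Klam Kr show ?thesis
    by (intro that[of "Kw + Klam + Kr"]) (meson le_add1 le_add2 le_trans)+
qed

lemma length_out_le:
  obtains K where "\<And>x w. length (out_prefix x w) \<le> K * Suc (length x)"
    and "\<And>x w. length (out_suffix x w) \<le> K * Suc (length w)"
proof -
  obtain K where letter: "\<And>x i. length (letter_out x i) \<le> K"
    and lam: "\<And>r. length (the (lam r)) \<le> K" and \<rho>: "\<And>l. length (\<rho> l) \<le> K"
    by (rule output_bound) iprover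
  have "length (out_prefix x w) \<le> K + length x * K" for x w
    unfolding out_prefix_def
    using add_mono[OF lam length_concat_map_le[of "letter_out (x @ w)" K "[0..<length x]", OF letter]]
    by simp
  moreover have "length (out_suffix x w) \<le> length w * K + K" for x w
    unfolding out_suffix_def
    using add_mono[OF length_concat_map_le[of "\<lambda>j. letter_out (x @ w) (length x + j)" K "[0..<length w]",
          OF letter] \<rho>]
    by simp
  ultimately show ?thesis
    by (intro that[of K]) (simp_all add: algebra_simps)
qed

lemma sim_left_imp_sim_L0:
  assumes "sim_left dL l0 u v"
  shows "sim_L0 (\<lambda>x. Some (f x)) u v"
proof -
  obtain K where K: "\<And>x w. length (out_prefix x w) \<le> K * Suc (length x)"
    and "\<And>x w. length (out_suffix x w) \<le> K * Suc (length w)"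
    by (rule length_out_le) iprover
  have suffix_eq: "out_suffix v w = out_suffix u w" for w
    using assms out_suffix_eq_if_lrun_eq unfolding sim_left_iff by metis
  have "rdist (f (u @ w)) (f (v @ w)) \<le> K * Suc (length u) + K * Suc (length v)" for w
    using rdist_append_same_le[of "out_prefix u w" "out_suffix u w" "out_prefix v w"] K[of u w] K[of v w]
    unfolding f_append_eq suffix_eq by linarith
  then show ?thesis
    unfolding sim_L0_def by auto
qed

lemma sim_right_imp_sim_R0:
  assumes "sim_right dR r0 u v"
  shows "sim_R0 (\<lambda>x. Some (f x)) u v"
proof -
  obtain K where "\<And>x w. length (out_prefix x w) \<le> K * Suc (length x)"
    and K: "\<And>x w. length (out_suffix x w) \<le> K * Suc (length w)"
    by (rule length_out_le) iprover
  have prefix_eq: "out_prefix w v = out_prefix w u" for w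
    using assms out_prefix_eq_if_rrun_eq unfolding sim_right_iff by metis
  have "ldist (f (w @ u)) (f (w @ v)) \<le> K * Suc (length u) + K * Suc (length v)" for w
    using ldist_same_append_le[of "out_prefix w u" "out_suffix w u" "out_suffix w v"] K[of w u] K[of w v]
    unfolding f_append_eq prefix_eq by linarith
  then show ?thesis
    unfolding sim_R0_def by auto
qed

end

theorem mainTheorem11:
  fixes dL :: "'l::finite \<Rightarrow> 'a::finite \<Rightarrow> 'l option" and l0 :: 'l
    and dR :: "'r::finite \<Rightarrow> 'a \<Rightarrow> 'r option" and r0 :: 'r
    and \<omega> :: "'l \<Rightarrow> 'a \<Rightarrow> 'r \<Rightarrow> 'a list option"
    and lam :: "'r \<Rightarrow> 'a list option" and \<rho> :: "'l \<Rightarrow> 'a list"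
    and f :: "'a list \<Rightarrow> 'a list"
  assumes total: "\<forall>u. bm_sem dL l0 dR r0 \<omega> lam \<rho> u = Some (f u)"
  shows "(\<forall>u v. sim_left dL l0 u v \<longrightarrow> sim_L0 (\<lambda>x. Some (f x)) u v) \<and>
         (\<forall>u v. sim_right dR r0 u v \<longrightarrow> sim_R0 (\<lambda>x. Some (f x)) u v)"
proof -
  interpret total_bimachine dL l0 dR r0 \<omega> lam \<rho> f
    using total by unfold_locales blast
  show ?thesis
    using sim_left_imp_sim_L0 sim_right_imp_sim_R0 by blast
qed

end
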